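(* Let $(x_j)_{j=1}^N$ and $(f_j)_{j=1}^N$ be frames for $\ell_2^M$ with $\|x_j\|=\|f_j\|$ for all $1\leq j\leq N$. Let $A>0$ be a lower frame bound for either $(x_j)_{j=1}^N$ or $(f_j)_{j=1}^N$. Then for all non-zero scalars $(d_j)_{j=1}^N$, if $B$ is a Bessel bound for both $(d_jx_j)_{j=1}^N$ and $(d_j^{-1}f_j)_{j=1}^N$, then $B\geq A$. In particular, if $(x_j)_{j=1}^N$ and $(f_j)_{j=1}^N$ are both tight frames, then they are both tight with the same frame bound $A>0$, and $$A=\min_{d=(d_j)_{j=1}^N}\max\{B_{dX},B_{d^{-1}F}\},$$ where the minimum is over sequences of non-zero scalars, $B_{dX}$ is the optimal Bessel bound of $(d_jx_j)_{j=1}^N$ and $B_{d^{-1}F}$ is the optimal Bessel bound of $(d_j^{-1}f_j)_{j=1}^N$.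
   Context: A sequence $(y_j)_{j=1}^N$ in $\ell_2^M$ has Bessel bound $B$ if $\sum_j|\langle x,y_j\rangle|^2\leq B\|x\|^2$ for all $x$ (the optimal Bessel bound is the least such $B$); it is a frame with lower frame bound $A>0$ if moreover $A\|x\|^2\leq\sum_j|\langle x,y_j\rangle|^2$ for all $x$; it is tight with frame bound $A$ if $\sum_j|\langle x,y_j\rangle|^2=A\|x\|^2$ for all $x$. *)

theory Defs
  imports Complex_Main
begin

text \<open>Vectors of the finite-dimensional Hilbert space l_2^M are modelled as functions
  from a finite index type 'm (with CARD('m) = M) to the complex numbers;
  finite sequences (y_j)_{j=1}^N are functions from a finite index type 'n
  (with CARD('n) = N) to such vectors.\<close>

definition l2_inner :: "('m::finite \<Rightarrow> complex) \<Rightarrow> ('m \<Rightarrow> complex) \<Rightarrow> complex" where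
  "l2_inner x y = (\<Sum>i\<in>UNIV. x i * cnj (y i))"

definition l2_norm :: "('m::finite \<Rightarrow> complex) \<Rightarrow> real" where
  "l2_norm x = sqrt (\<Sum>i\<in>UNIV. (cmod (x i))\<^sup>2)"

definition frame_sum :: "('n::finite \<Rightarrow> ('m::finite \<Rightarrow> complex)) \<Rightarrow> ('m \<Rightarrow> complex) \<Rightarrow> real" where
  "frame_sum y x = (\<Sum>j\<in>UNIV. (cmod (l2_inner x (y j)))\<^sup>2)"

definition bessel_bound :: "('n::finite \<Rightarrow> ('m::finite \<Rightarrow> complex)) \<Rightarrow> real \<Rightarrow> bool" where
  "bessel_bound y B \<longleftrightarrow> (\<forall>x. frame_sum y x \<le> B * (l2_norm x)\<^sup>2)"

definition optimal_bessel_bound :: "('n::finite \<Rightarrow> ('m::finite \<Rightarrow> complex)) \<Rightarrow> real" where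
  "optimal_bessel_bound y = (LEAST B. bessel_bound y B)"

definition lower_frame_bound :: "('n::finite \<Rightarrow> ('m::finite \<Rightarrow> complex)) \<Rightarrow> real \<Rightarrow> bool" where
  "lower_frame_bound y A \<longleftrightarrow> A > 0 \<and> (\<forall>x. A * (l2_norm x)\<^sup>2 \<le> frame_sum y x)"

definition is_frame :: "('n::finite \<Rightarrow> ('m::finite \<Rightarrow> complex)) \<Rightarrow> bool" where
  "is_frame y \<longleftrightarrow> (\<exists>B. bessel_bound y B) \<and> (\<exists>A. lower_frame_bound y A)"

definition tight_frame :: "('n::finite \<Rightarrow> ('m::finite \<Rightarrow> complex)) \<Rightarrow> real \<Rightarrow> bool" where
  "tight_frame y A \<longleftrightarrow> is_frame y \<and> (\<forall>x. frame_sum y x = A * (l2_norm x)\<^sup>2)"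

definition scale_seq :: "('n \<Rightarrow> complex) \<Rightarrow> ('n \<Rightarrow> ('m \<Rightarrow> complex)) \<Rightarrow> ('n \<Rightarrow> ('m \<Rightarrow> complex))" where
  "scale_seq d y = (\<lambda>j i. d j * y j i)"

end

theory Submission
  imports Defs "HOL-Analysis.Convex"
begin

text \<open>The proof is a trace argument. Computing the trace of the frame operator of a sequence
  \<open>y\<close> once in the standard basis \<open>e\<^sub>1, \<dots>, e\<^sub>M\<close> and once along \<open>y\<close> gives
  \<open>\<Sum>\<^sub>i \<Sum>\<^sub>j |\<langle>e\<^sub>i, y\<^sub>j\<rangle>|\<^sup>2 = \<Sum>\<^sub>j \<parallel>y\<^sub>j\<parallel>\<^sup>2\<close>, so a Bessel bound \<open>B\<close> forces
  \<open>\<Sum>\<^sub>j \<parallel>y\<^sub>j\<parallel>\<^sup>2 \<le> B M\<close> and a lower frame bound \<open>A\<close> forces \<open>A M \<le> \<Sum>\<^sub>j \<parallel>y\<^sub>j\<parallel>\<^sup>2\<close>.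
  If \<open>B\<close> is a Bessel bound of both \<open>(d\<^sub>j x\<^sub>j)\<close> and \<open>(d\<^sub>j\<^sup>-\<^sup>1 f\<^sub>j)\<close>, then, writing
  \<open>a\<^sub>j = \<parallel>x\<^sub>j\<parallel>\<^sup>2 = \<parallel>f\<^sub>j\<parallel>\<^sup>2\<close> and using \<open>t + 1/t \<ge> 2\<close>,
  \<open>2 A M \<le> 2 \<Sum>\<^sub>j a\<^sub>j \<le> \<Sum>\<^sub>j (|d\<^sub>j|\<^sup>2 + |d\<^sub>j|\<^sup>-\<^sup>2) a\<^sub>j \<le> 2 B M\<close>.
  For tight frames the same identity shows that equal norms force equal frame bounds,
  and \<open>d = 1\<close> attains the minimum.\<close>

definition l2_unit :: "'m \<Rightarrow> ('m \<Rightarrow> complex)" where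
  "l2_unit i = (\<lambda>k. if k = i then 1 else 0)"

lemma l2_norm_power2: "(l2_norm x)\<^sup>2 = (\<Sum>i\<in>UNIV. (cmod (x i))\<^sup>2)"
  by (simp add: l2_norm_def sum_nonneg)

lemma l2_inner_unit_left: "l2_inner (l2_unit i) v = cnj (v i)"
  by (simp add: l2_inner_def l2_unit_def if_distrib[of "\<lambda>z. z * _"] cong: if_cong)

lemma l2_norm_unit: "l2_norm (l2_unit i) = 1"
  by (simp add: l2_norm_def l2_unit_def if_distrib[of "\<lambda>z. (cmod z)\<^sup>2"] cong: if_cong)

lemma cmod_l2_inner_power2_le: "(cmod (l2_inner x y))\<^sup>2 \<le> (l2_norm x)\<^sup>2 * (l2_norm y)\<^sup>2"
proof -
  have "cmod (l2_inner x y) \<le> (\<Sum>i\<in>UNIV. cmod (x i) * cmod (y i))"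
    unfolding l2_inner_def by (rule order_trans[OF norm_sum]) (simp add: norm_mult)
  then have "(cmod (l2_inner x y))\<^sup>2 \<le> (\<Sum>i\<in>UNIV. cmod (x i) * cmod (y i))\<^sup>2"
    by (simp add: power_mono)
  also have "\<dots> \<le> (\<Sum>i\<in>UNIV. (cmod (x i))\<^sup>2) * (\<Sum>i\<in>UNIV. (cmod (y i))\<^sup>2)"
    by (rule Cauchy_Schwarz_ineq_sum)
  finally show ?thesis by (simp add: l2_norm_power2)
qed

lemma bessel_bound_sum_norms: "bessel_bound y (\<Sum>j\<in>UNIV. (l2_norm (y j))\<^sup>2)"
  unfolding bessel_bound_def
proof
  fix x
  have "frame_sum y x \<le> (\<Sum>j\<in>UNIV. (l2_norm x)\<^sup>2 * (l2_norm (y j))\<^sup>2)"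
    unfolding frame_sum_def by (rule sum_mono) (rule cmod_l2_inner_power2_le)
  then show "frame_sum y x \<le> (\<Sum>j\<in>UNIV. (l2_norm (y j))\<^sup>2) * (l2_norm x)\<^sup>2"
    by (simp add: sum_distrib_left sum_distrib_right mult.commute)
qed

lemma bessel_bound_mono: "bessel_bound y B \<Longrightarrow> B \<le> B' \<Longrightarrow> bessel_bound y B'"
  unfolding bessel_bound_def by (meson mult_right_mono order_trans zero_le_power2)

lemma frame_sum_unit_le: "bessel_bound y B \<Longrightarrow> frame_sum y (l2_unit i) \<le> B"
  by (metis bessel_bound_def l2_norm_unit mult.right_neutral one_power2)

lemma frame_sum_unit_ge: "lower_frame_bound y A \<Longrightarrow> A \<le> frame_sum y (l2_unit i)"
  by (metis lower_frame_bound_def l2_norm_unit mult.right_neutral one_power2)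

lemma frame_sum_unit_tight: "tight_frame y A \<Longrightarrow> frame_sum y (l2_unit i) = A"
  by (simp add: tight_frame_def l2_norm_unit)

lemma frame_sum_nonneg: "0 \<le> frame_sum y x"
  by (simp add: frame_sum_def sum_nonneg)

lemma bessel_bound_nonneg: "bessel_bound y B \<Longrightarrow> 0 \<le> B"
  using frame_sum_unit_le frame_sum_nonneg order_trans by blast

lemma bessel_bound_optimal_bessel_bound: "bessel_bound y (optimal_bessel_bound y)"
proof -
  define S where "S = {B. bessel_bound y B}"
  have "S \<noteq> {}"
    using bessel_bound_sum_norms S_def by blast
  have "bdd_below S"
    by (auto simp: S_def bdd_below_def intro: bessel_bound_nonneg)
  have Inf_bound: "bessel_bound y (Inf S)"
    unfolding bessel_bound_def
  proof
    fix x
    show "frame_sum y x \<le> Inf S * (l2_norm x)\<^sup>2"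
    proof (cases "l2_norm x = 0")
      case True
      moreover have "frame_sum y x \<le> (\<Sum>j\<in>UNIV. (l2_norm (y j))\<^sup>2) * (l2_norm x)\<^sup>2"
        using bessel_bound_sum_norms[of y] by (simp add: bessel_bound_def)
      ultimately show ?thesis by simp
    next
      case False
      then have "(l2_norm x)\<^sup>2 > 0" by simp
      moreover have "frame_sum y x / (l2_norm x)\<^sup>2 \<le> Inf S"
        using \<open>S \<noteq> {}\<close> \<open>(l2_norm x)\<^sup>2 > 0\<close>
        by (intro cInf_greatest) (auto simp: S_def bessel_bound_def pos_divide_le_eq)
      ultimately show ?thesis by (simp add: pos_divide_le_eq)
    qed
  qed
  have "optimal_bessel_bound y = Inf S"
    unfolding optimal_bessel_bound_def
    using Inf_bound cInf_lower[OF _ \<open>bdd_below S\<close>] by (intro Least_equality) (auto simp: S_def)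
  with Inf_bound show ?thesis by simp
qed

lemma optimal_bessel_bound_tight:
  assumes "tight_frame y A"
  shows "optimal_bessel_bound y = A"
  unfolding optimal_bessel_bound_def
proof (rule Least_equality)
  show "bessel_bound y A"
    using assms by (simp add: tight_frame_def bessel_bound_def)
  show "A \<le> B" if "bessel_bound y B" for B
    using frame_sum_unit_le[OF that] frame_sum_unit_tight[OF assms] by metis
qed

lemma tight_frame_bound_pos: "tight_frame y A \<Longrightarrow> 0 < A"
  by (metis frame_sum_unit_ge frame_sum_unit_tight is_frame_def less_le_trans
      lower_frame_bound_def tight_frame_def)

lemma tight_frame_lower_frame_bound: "tight_frame y A \<Longrightarrow> lower_frame_bound y A"
  by (simp add: lower_frame_bound_def tight_frame_bound_pos) (simp add: tight_frame_def)

lemma sum_frame_sum_units: "(\<Sum>i\<in>UNIV. frame_sum y (l2_unit i)) = (\<Sum>j\<in>UNIV. (l2_norm (y j))\<^sup>2)"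
  unfolding frame_sum_def l2_inner_unit_left l2_norm_power2 complex_mod_cnj by (rule sum.swap)

lemma sum_norms_le_bessel_bound:
  fixes y :: "'n::finite \<Rightarrow> ('m::finite \<Rightarrow> complex)"
  assumes "bessel_bound y B"
  shows "(\<Sum>j\<in>UNIV. (l2_norm (y j))\<^sup>2) \<le> B * card (UNIV :: 'm set)"
proof -
  have "(\<Sum>i\<in>UNIV. frame_sum y (l2_unit i)) \<le> (\<Sum>i\<in>(UNIV::'m set). B)"
    using assms by (intro sum_mono frame_sum_unit_le)
  then show ?thesis by (simp add: sum_frame_sum_units mult.commute)
qed

lemma lower_frame_bound_le_sum_norms:
  fixes y :: "'n::finite \<Rightarrow> ('m::finite \<Rightarrow> complex)"
  assumes "lower_frame_bound y A"
  shows "A * card (UNIV :: 'm set) \<le> (\<Sum>j\<in>UNIV. (l2_norm (y j))\<^sup>2)"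
proof -
  have "(\<Sum>i\<in>(UNIV::'m set). A) \<le> (\<Sum>i\<in>UNIV. frame_sum y (l2_unit i))"
    using assms by (intro sum_mono frame_sum_unit_ge)
  then show ?thesis by (simp add: sum_frame_sum_units mult.commute)
qed

lemma tight_frame_sum_norms:
  fixes y :: "'n::finite \<Rightarrow> ('m::finite \<Rightarrow> complex)"
  assumes "tight_frame y A"
  shows "A * card (UNIV :: 'm set) = (\<Sum>j\<in>UNIV. (l2_norm (y j))\<^sup>2)"
  using sum_frame_sum_units[of y] frame_sum_unit_tight[OF assms] by (simp add: mult.commute)

lemma tight_frame_bounds_eq:
  fixes x f :: "'n::finite \<Rightarrow> ('m::finite \<Rightarrow> complex)"
  assumes "\<forall>j. l2_norm (x j) = l2_norm (f j)" and "tight_frame x A" and "tight_frame f A'"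
  shows "A = A'"
proof -
  have "A * card (UNIV :: 'm set) = A' * card (UNIV :: 'm set)"
    using tight_frame_sum_norms[OF assms(2)] tight_frame_sum_norms[OF assms(3)] assms(1) by simp
  then show ?thesis by simp
qed

lemma l2_norm_scale_seq_power2:
  "(l2_norm (scale_seq d y j))\<^sup>2 = (cmod (d j))\<^sup>2 * (l2_norm (y j))\<^sup>2"
  unfolding l2_norm_power2 scale_seq_def
  by (simp add: norm_mult power_mult_distrib sum_distrib_left)

lemma double_le_mult_add_divide:
  fixes a t :: real
  assumes "0 \<le> a" and "0 < t"
  shows "2 * a \<le> t * a + a / t"
proof -
  have "0 \<le> a * (t - 1)\<^sup>2 / t"
    using assms by simp
  also have "\<dots> = t * a + a / t - 2 * a"
    using assms by (simp add: field_simps power2_eq_square)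
  finally show ?thesis by simp
qed

lemma lower_frame_bound_le_common_bessel_bound:
  fixes x f :: "'n::finite \<Rightarrow> ('m::finite \<Rightarrow> complex)"
  assumes norms: "\<forall>j. l2_norm (x j) = l2_norm (f j)"
    and lower: "lower_frame_bound x A \<or> lower_frame_bound f A"
    and d: "\<forall>j. d j \<noteq> 0"
    and bessel_x: "bessel_bound (scale_seq d x) B"
    and bessel_f: "bessel_bound (scale_seq (\<lambda>j. inverse (d j)) f) B"
  shows "A \<le> B"
proof -
  define a where "a j = (l2_norm (x j))\<^sup>2" for j
  define t where "t j = (cmod (d j))\<^sup>2" for j
  have "t j > 0" for j
    using d by (simp add: t_def)
  have "(\<Sum>j\<in>UNIV. t j * a j) \<le> B * card (UNIV :: 'm set)"
    using sum_norms_le_bessel_bound[OF bessel_x] by (simp add: l2_norm_scale_seq_power2 a_def t_def)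
  moreover have "(\<Sum>j\<in>UNIV. a j / t j) \<le> B * card (UNIV :: 'm set)"
    using sum_norms_le_bessel_bound[OF bessel_f] norms
    by (simp add: l2_norm_scale_seq_power2 a_def t_def norm_inverse power_inverse divide_inverse
        mult.commute)
  moreover have "A * card (UNIV :: 'm set) \<le> (\<Sum>j\<in>UNIV. a j)"
    using lower lower_frame_bound_le_sum_norms[of x A] lower_frame_bound_le_sum_norms[of f A] norms
    by (auto simp: a_def)
  moreover have "2 * (\<Sum>j\<in>UNIV. a j) \<le> (\<Sum>j\<in>UNIV. t j * a j) + (\<Sum>j\<in>UNIV. a j / t j)"
    unfolding sum_distrib_left sum.distrib[symmetric]
    using \<open>\<And>j. t j > 0\<close> by (intro sum_mono double_le_mult_add_divide) (simp_all add: a_def)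
  ultimately have "A * card (UNIV :: 'm set) \<le> B * card (UNIV :: 'm set)"
    by linarith
  then show ?thesis by (simp add: card_gt_0_iff)
qed

lemma lower_frame_bound_le_max_optimal_bessel_bounds:
  fixes x f :: "'n::finite \<Rightarrow> ('m::finite \<Rightarrow> complex)"
  assumes "\<forall>j. l2_norm (x j) = l2_norm (f j)"
    and "lower_frame_bound x A \<or> lower_frame_bound f A"
    and "\<forall>j. d j \<noteq> 0"
  shows "A \<le> max (optimal_bessel_bound (scale_seq d x))
                  (optimal_bessel_bound (scale_seq (\<lambda>j. inverse (d j)) f))"
  by (intro lower_frame_bound_le_common_bessel_bound[OF assms])
    (auto intro: bessel_bound_mono[OF bessel_bound_optimal_bessel_bound])

lemma scale_seq_one: "scale_seq (\<lambda>j. 1) y = y"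
  by (simp add: scale_seq_def)

theorem proposition4p2:
  fixes x f :: "'n::finite \<Rightarrow> ('m::finite \<Rightarrow> complex)"
  assumes "is_frame x" and "is_frame f"
    and "\<forall>j. l2_norm (x j) = l2_norm (f j)"
  shows "(\<forall>A. (lower_frame_bound x A \<or> lower_frame_bound f A) \<longrightarrow>
            (\<forall>d :: 'n \<Rightarrow> complex. (\<forall>j. d j \<noteq> 0) \<longrightarrow>
              (\<forall>B. bessel_bound (scale_seq d x) B \<and>
                   bessel_bound (scale_seq (\<lambda>j. inverse (d j)) f) B \<longrightarrow> B \<ge> A)))
       \<and> ((\<exists>A1. tight_frame x A1) \<and> (\<exists>A2. tight_frame f A2) \<longrightarrow>
            (\<exists>A>0. tight_frame x A \<and> tight_frame f A \<and>
               (\<exists>d :: 'n \<Rightarrow> complex. (\<forall>j. d j \<noteq> 0) \<and>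
                  max (optimal_bessel_bound (scale_seq d x))
                      (optimal_bessel_bound (scale_seq (\<lambda>j. inverse (d j)) f)) = A) \<and>
               (\<forall>d :: 'n \<Rightarrow> complex. (\<forall>j. d j \<noteq> 0) \<longrightarrow>
                  A \<le> max (optimal_bessel_bound (scale_seq d x))
                      (optimal_bessel_bound (scale_seq (\<lambda>j. inverse (d j)) f)))))"
proof (intro conjI impI allI)
  fix A d B
  assume "lower_frame_bound x A \<or> lower_frame_bound f A" and "\<forall>j. d j \<noteq> 0"
    and "bessel_bound (scale_seq d x) B \<and> bessel_bound (scale_seq (\<lambda>j. inverse (d j)) f) B"
  then show "A \<le> B"
    using lower_frame_bound_le_common_bessel_bound[OF assms(3)] by blast
next
  assume "(\<exists>A1. tight_frame x A1) \<and> (\<exists>A2. tight_frame f A2)"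
  then obtain A where tight_x: "tight_frame x A" and tight_f: "tight_frame f A"
    using tight_frame_bounds_eq[OF assms(3)] by blast
  have "max (optimal_bessel_bound (scale_seq (\<lambda>j. 1) x))
            (optimal_bessel_bound (scale_seq (\<lambda>j. inverse 1) f)) = A"
    by (simp add: scale_seq_one optimal_bessel_bound_tight[OF tight_x]
        optimal_bessel_bound_tight[OF tight_f])
  with tight_x tight_f show "\<exists>A>0. tight_frame x A \<and> tight_frame f A \<and>
               (\<exists>d :: 'n \<Rightarrow> complex. (\<forall>j. d j \<noteq> 0) \<and>
                  max (optimal_bessel_bound (scale_seq d x))
                      (optimal_bessel_bound (scale_seq (\<lambda>j. inverse (d j)) f)) = A) \<and>
               (\<forall>d :: 'n \<Rightarrow> complex. (\<forall>j. d j \<noteq> 0) \<longrightarrow>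
                  A \<le> max (optimal_bessel_bound (scale_seq d x))
                      (optimal_bessel_bound (scale_seq (\<lambda>j. inverse (d j)) f)))"
    by (intro exI[of _ A] conjI exI[of _ "\<lambda>j. 1"] allI impI tight_frame_bound_pos
        lower_frame_bound_le_max_optimal_bessel_bounds[OF assms(3)] disjI1
        tight_frame_lower_frame_bound) auto
qed

end
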